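(* Let $0<q<1$, let $n,i$ be integers with $1\le i\le n$, and let $x\in[0,1]$. Then $$\frac{1}{([1-x]_q+[x]_q)^{n-i}}\sum_{k=i-1}^n\frac{\binom{k}{i}}{\binom{n}{i}}B_{k,n}(x,q)=[x]_q^i.$$
   Context: Let $q$ be a real number with $0<q<1$. For real $x$, the $q$-number is $[x]_q=\frac{1-q^x}{1-q}$. For a nonnegative integer $k$ and $x\in[0,1]$, the modified $q$-Bernstein polynomials $B_{k,n}(x,q)$, $n=0,1,2,\dots$, are defined by the generating function $$\frac{t^k e^{[1-x]_q t}[x]_q^k}{k!}=\sum_{n=0}^\infty B_{k,n}(x,q)\frac{t^n}{n!}.$$ Here $\binom{k}{i}=0$ when $k<i$. *)

theory Defs
  imports Complex_Main "HOL-Computational_Algebra.Formal_Power_Series"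
begin

definition qnum :: "real \<Rightarrow> real \<Rightarrow> real" where
  "qnum x q = (1 - q powr x) / (1 - q)"

definition qBernstein :: "nat \<Rightarrow> nat \<Rightarrow> real \<Rightarrow> real \<Rightarrow> real" where
  "qBernstein k n x q =
     fact n * fps_nth (fps_X ^ k * fps_exp (qnum (1 - x) q) * fps_const (qnum x q ^ k / fact k)) n"

end

theory Submission
  imports Defs
begin

text \<open>Expanding the generating function gives the closed form
  B_{k,n}(x,q) = (n choose k) [1-x]_q^(n-k) [x]_q^k. The identity then follows from
  (n choose k)(k choose i) = (n choose i)(n-i choose k-i) and the binomial theorem for
  ([1-x]_q + [x]_q)^(n-i), which is nonzero because q^(1-x) and q^x are at most 1 and
  not both equal to 1.\<close>

lemma qBernstein_eq:
  assumes "k \<le> n"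
  shows "qBernstein k n x q = real (n choose k) * qnum (1 - x) q ^ (n - k) * qnum x q ^ k"
  using assms unfolding qBernstein_def
  by (simp add: fps_X_power_mult_nth fps_exp_def binomial_fact field_simps)

lemma qnum_complement_add_pos:
  assumes "0 < q" "q < 1" "0 \<le> x" "x \<le> 1"
  shows "qnum (1 - x) q + qnum x q > 0"
proof -
  have le1: "q powr (1 - x) \<le> 1" "q powr x \<le> 1"
    using assms by (auto intro!: powr_le1)
  have "q powr (1 - x) < 1 \<or> q powr x < 1"
  proof (cases "x = 0")
    case False
    then have "q powr x < 1 powr x"
      using assms by (intro powr_less_mono2) auto
    then show ?thesis by simp
  qed (use assms in simp)
  with le1 have "(1 - q powr (1 - x)) + (1 - q powr x) > 0" by linarith
  with assms show ?thesis
    unfolding qnum_def by (simp add: add_divide_distrib[symmetric])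
qed

lemma sum_choose_ratio_binomial:
  fixes a b :: "'a :: field_char_0"
  assumes "i \<le> n"
  shows "(\<Sum>k = i..n. of_nat (k choose i) / of_nat (n choose i) * (of_nat (n choose k) * a ^ (n - k) * b ^ k))
         = b ^ i * (a + b) ^ (n - i)"
proof -
  have "(\<Sum>k = i..n. of_nat (k choose i) / of_nat (n choose i) * (of_nat (n choose k) * a ^ (n - k) * b ^ k))
      = (\<Sum>k = i..n. of_nat (n - i choose (k - i)) * a ^ (n - k) * b ^ k)"
  proof (rule sum.cong[OF refl])
    fix k assume k: "k \<in> {i..n}"
    have "of_nat (n choose k) * of_nat (k choose i) = (of_nat (n choose i) * of_nat (n - i choose (k - i)) :: 'a)"
      using k choose_mult[of i k n] by (simp flip: of_nat_mult)
    moreover have "(of_nat (n choose i) :: 'a) \<noteq> 0"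
      using assms by simp
    ultimately show "of_nat (k choose i) / of_nat (n choose i) * (of_nat (n choose k) * a ^ (n - k) * b ^ k)
        = of_nat (n - i choose (k - i)) * a ^ (n - k) * b ^ k"
      by (simp add: field_simps)
  qed
  also have "\<dots> = (\<Sum>j = 0..n - i. of_nat (n - i choose j) * a ^ (n - i - j) * b ^ (j + i))"
    by (rule sum.reindex_bij_witness[where i="\<lambda>k. k + i" and j="\<lambda>j. j - i"]) (use assms in auto)
  also have "\<dots> = b ^ i * (\<Sum>j = 0..n - i. of_nat (n - i choose j) * b ^ j * a ^ (n - i - j))"
    by (simp add: sum_distrib_left power_add algebra_simps)
  also have "\<dots> = b ^ i * (b + a) ^ (n - i)"
    by (simp add: binomial_ring atLeast0AtMost)
  finally show ?thesis
    by (simp add: add.commute)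
qed

theorem theorem7:
  fixes q x :: real and n i :: nat
  assumes "0 < q" "q < 1" "1 \<le> i" "i \<le> n" "0 \<le> x" "x \<le> 1"
  shows "1 / (qnum (1 - x) q + qnum x q) ^ (n - i) *
           (\<Sum>k = i - 1..n. (real (k choose i) / real (n choose i)) * qBernstein k n x q)
         = qnum x q ^ i"
proof -
  have "{i - 1..n} = insert (i - 1) {i..n}"
    using assms by auto
  then have "(\<Sum>k = i - 1..n. (real (k choose i) / real (n choose i)) * qBernstein k n x q)
      = (\<Sum>k = i..n. (real (k choose i) / real (n choose i)) * qBernstein k n x q)"
    using assms by simp
  also have "\<dots> = (\<Sum>k = i..n. (real (k choose i) / real (n choose i)) *
      (real (n choose k) * qnum (1 - x) q ^ (n - k) * qnum x q ^ k))"
    by (rule sum.cong) (auto simp: qBernstein_eq)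
  also have "\<dots> = qnum x q ^ i * (qnum (1 - x) q + qnum x q) ^ (n - i)"
    using assms(4) by (rule sum_choose_ratio_binomial)
  finally show ?thesis
    using qnum_complement_add_pos[OF assms(1,2,5,6)] by simp
qed

end
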